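(* Let $G$ be a graph with $\mathrm{diam}(G)=k\ge 2$. If $F$ is a set of edges of $G$ such that $d(e,f)=k$ for all distinct $e,f\in F$, then $\mathrm{gp}(G)\ge 2|F|$.
   Context: All graphs are finite, simple and connected; $\mathrm{diam}(G)$ is the maximum distance between two vertices. For edges $e=uv$ and $f=xy$, $d(e,f)=\min\{d(u,x),d(u,y),d(v,x),d(v,y)\}$. A set of vertices is a general position set if no three of its vertices lie on a common geodesic (shortest path); $\mathrm{gp}(G)$ is the maximum cardinality of a general position set of $G$. *)

theory Defs
  imports Main
begin

definition simple_graph :: "'a set \<Rightarrow> ('a \<Rightarrow> 'a \<Rightarrow> bool) \<Rightarrow> bool" where
  "simple_graph V Adj \<longleftrightarrow> finite V \<and> V \<noteq> {} \<and>
     (\<forall>u v. Adj u v \<longrightarrow> u \<in> V \<and> v \<in> V) \<and>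
     (\<forall>u v. Adj u v \<longrightarrow> Adj v u) \<and> (\<forall>u. \<not> Adj u u)"

definition walk :: "'a set \<Rightarrow> ('a \<Rightarrow> 'a \<Rightarrow> bool) \<Rightarrow> 'a list \<Rightarrow> bool" where
  "walk V Adj p \<longleftrightarrow> p \<noteq> [] \<and> set p \<subseteq> V \<and> (\<forall>i. Suc i < length p \<longrightarrow> Adj (p ! i) (p ! Suc i))"

definition walk_betw :: "'a set \<Rightarrow> ('a \<Rightarrow> 'a \<Rightarrow> bool) \<Rightarrow> 'a \<Rightarrow> 'a list \<Rightarrow> 'a \<Rightarrow> bool" where
  "walk_betw V Adj u p v \<longleftrightarrow> walk V Adj p \<and> hd p = u \<and> last p = v"

definition connected_graph :: "'a set \<Rightarrow> ('a \<Rightarrow> 'a \<Rightarrow> bool) \<Rightarrow> bool" where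
  "connected_graph V Adj \<longleftrightarrow> (\<forall>u\<in>V. \<forall>v\<in>V. \<exists>p. walk_betw V Adj u p v)"

definition gdist :: "'a set \<Rightarrow> ('a \<Rightarrow> 'a \<Rightarrow> bool) \<Rightarrow> 'a \<Rightarrow> 'a \<Rightarrow> nat" where
  "gdist V Adj u v = (LEAST n. \<exists>p. walk_betw V Adj u p v \<and> length p = Suc n)"

definition diam :: "'a set \<Rightarrow> ('a \<Rightarrow> 'a \<Rightarrow> bool) \<Rightarrow> nat" where
  "diam V Adj = Max {gdist V Adj u v | u v. u \<in> V \<and> v \<in> V}"

definition geodesic :: "'a set \<Rightarrow> ('a \<Rightarrow> 'a \<Rightarrow> bool) \<Rightarrow> 'a list \<Rightarrow> bool" where
  "geodesic V Adj p \<longleftrightarrow> walk V Adj p \<and> length p = Suc (gdist V Adj (hd p) (last p))"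

definition gp_set :: "'a set \<Rightarrow> ('a \<Rightarrow> 'a \<Rightarrow> bool) \<Rightarrow> 'a set \<Rightarrow> bool" where
  "gp_set V Adj S \<longleftrightarrow> S \<subseteq> V \<and>
     (\<forall>x\<in>S. \<forall>y\<in>S. \<forall>z\<in>S. x \<noteq> y \<and> y \<noteq> z \<and> x \<noteq> z \<longrightarrow>
        \<not> (\<exists>p. geodesic V Adj p \<and> {x, y, z} \<subseteq> set p))"

definition gp :: "'a set \<Rightarrow> ('a \<Rightarrow> 'a \<Rightarrow> bool) \<Rightarrow> nat" where
  "gp V Adj = Max {card S | S. gp_set V Adj S}"

definition edges :: "'a set \<Rightarrow> ('a \<Rightarrow> 'a \<Rightarrow> bool) \<Rightarrow> 'a set set" where
  "edges V Adj = {{u, v} | u v. Adj u v}"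

definition edge_dist :: "'a set \<Rightarrow> ('a \<Rightarrow> 'a \<Rightarrow> bool) \<Rightarrow> 'a set \<Rightarrow> 'a set \<Rightarrow> nat" where
  "edge_dist V Adj e f = Min {gdist V Adj x y | x y. x \<in> e \<and> y \<in> f}"

end

theory Submission imports Defs begin

text \<open>Let S be the set of endpoints of the edges in F. Three distinct vertices of S on a common
  geodesic, in this order, cannot all lie in one edge, so two consecutive ones lie in different
  edges of F and are at distance at least k; the other consecutive pair is at distance at least 1,
  so the outer two are at distance greater than k = diam G, which is impossible. Hence S is in
  general position. The edges of F are pairwise disjoint because k > 0, so S has 2|F| vertices.\<close>

lemma walk_append:
  assumes "walk V Adj p" "walk V Adj q" "Adj (last p) (hd q)"
  shows "walk V Adj (p @ q)"
  unfolding walk_def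
proof (intro conjI allI impI)
  show "p @ q \<noteq> []" "set (p @ q) \<subseteq> V" using assms(1,2) by (auto simp: walk_def)
  fix i assume i: "Suc i < length (p @ q)"
  have "p \<noteq> []" "q \<noteq> []" using assms by (auto simp: walk_def)
  consider "Suc i < length p" | "Suc i = length p" | "length p \<le> i" by linarith
  then show "Adj ((p @ q) ! i) ((p @ q) ! Suc i)"
  proof cases
    case 1 then show ?thesis using assms(1) by (simp add: walk_def nth_append)
  next
    case 2
    then have "i = length p - 1" by simp
    then show ?thesis using assms(3) \<open>p \<noteq> []\<close> \<open>q \<noteq> []\<close>
      by (simp add: nth_append last_conv_nth hd_conv_nth)
  next
    case 3
    then have "Suc (i - length p) < length q" using i by simp
    then show ?thesis using assms(2) 3 by (simp add: walk_def nth_append Suc_diff_le)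
  qed
qed

lemma walk_betw_append:
  assumes "walk_betw V Adj u p v" "walk_betw V Adj v q w"
  shows "walk_betw V Adj u (p @ tl q) w" "length (p @ tl q) = length p + length q - 1"
proof -
  obtain x q' where q: "q = x # q'" and "x = v"
    using assms(2) by (cases q) (auto simp: walk_betw_def walk_def)
  show "length (p @ tl q) = length p + length q - 1" using q by simp
  show "walk_betw V Adj u (p @ tl q) w"
  proof (cases "q' = []")
    case True then show ?thesis using assms q \<open>x = v\<close> by (auto simp: walk_betw_def)
  next
    case False
    have wq: "walk V Adj q" using assms(2) by (simp add: walk_betw_def)
    have "walk V Adj q'"
      using wq False unfolding q walk_def by (auto simp del: nth_Cons_Suc)
    moreover have "Adj (q ! 0) (q ! 1)"
      using wq False unfolding q walk_def by auto
    then have "Adj (last p) (hd q')"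
      using False assms(1) q \<open>x = v\<close> by (simp add: walk_betw_def hd_conv_nth)
    ultimately have "walk V Adj (p @ q')"
      using assms(1) walk_append unfolding walk_betw_def by blast
    then show ?thesis using assms False unfolding q walk_betw_def walk_def by simp
  qed
qed

lemma walk_betw_subwalk:
  assumes "walk V Adj p" "a \<le> b" "b < length p"
  shows "walk_betw V Adj (p ! a) (take (Suc (b - a)) (drop a p)) (p ! b)"
proof -
  let ?q = "take (Suc (b - a)) (drop a p)"
  have "walk V Adj ?q"
    unfolding walk_def
  proof (intro conjI allI impI)
    show "?q \<noteq> []" using assms by simp
    show "set ?q \<subseteq> V" using assms(1) unfolding walk_def
      by (meson order_trans set_drop_subset set_take_subset)
    fix i assume "Suc i < length ?q"
    then have "Suc (a + i) < length p" "i < b - a" using assms by auto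
    then show "Adj (?q ! i) (?q ! Suc i)" using assms(1) by (simp add: walk_def)
  qed
  moreover have "length ?q = Suc (b - a)" using assms by simp
  then have "last ?q = p ! b" using assms by (simp add: last_conv_nth)
  ultimately show ?thesis using assms by (simp add: walk_betw_def hd_conv_nth)
qed

lemma gdist_le_length:
  assumes "walk_betw V Adj u p v" shows "gdist V Adj u v \<le> length p - 1"
  unfolding gdist_def
  by (rule Least_le) (use assms in \<open>auto simp: walk_betw_def walk_def\<close>)

lemma gdist_self:
  assumes "x \<in> V" shows "gdist V Adj x x = 0"
  using gdist_le_length[of V Adj x "[x]" x] assms by (simp add: walk_betw_def walk_def)

lemma gdist_shortest_walk:
  assumes "connected_graph V Adj" "u \<in> V" "v \<in> V"
  obtains p where "walk_betw V Adj u p v" "length p = Suc (gdist V Adj u v)"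
proof -
  obtain p where "walk_betw V Adj u p v" using assms unfolding connected_graph_def by blast
  then have "\<exists>n p. walk_betw V Adj u p v \<and> length p = Suc n"
    by (metis Suc_pred length_greater_0_conv walk_betw_def walk_def)
  from LeastI_ex[OF this] show ?thesis using that unfolding gdist_def by blast
qed

lemma gdist_triangle:
  assumes "connected_graph V Adj" "u \<in> V" "v \<in> V" "w \<in> V"
  shows "gdist V Adj u w \<le> gdist V Adj u v + gdist V Adj v w"
proof -
  obtain p where p: "walk_betw V Adj u p v" "length p = Suc (gdist V Adj u v)"
    using gdist_shortest_walk assms by metis
  obtain q where q: "walk_betw V Adj v q w" "length q = Suc (gdist V Adj v w)"
    using gdist_shortest_walk assms by metis
  show ?thesis
    using gdist_le_length[OF walk_betw_append(1)[OF p(1) q(1)]] walk_betw_append(2)[OF p(1) q(1)] p(2) q(2)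
    by simp
qed

lemma gdist_le_diam:
  assumes "simple_graph V Adj" "u \<in> V" "v \<in> V"
  shows "gdist V Adj u v \<le> diam V Adj"
proof -
  have "{gdist V Adj u v | u v. u \<in> V \<and> v \<in> V} = (\<lambda>(u, v). gdist V Adj u v) ` (V \<times> V)" by auto
  then have "finite {gdist V Adj u v | u v. u \<in> V \<and> v \<in> V}"
    using assms(1) by (simp add: simple_graph_def)
  then show ?thesis unfolding diam_def using assms by (intro Max_ge) auto
qed

text \<open>Every subpath of a geodesic is a geodesic: the bound from the subwalks is forced to be
  tight by the triangle inequality through the two cut points.\<close>

lemma gdist_geodesic_nth:
  assumes "connected_graph V Adj" "geodesic V Adj p" "a \<le> b" "b < length p"
  shows "gdist V Adj (p ! a) (p ! b) = b - a"
proof -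
  have w: "walk V Adj p" and l: "length p = Suc (gdist V Adj (hd p) (last p))"
    using assms(2) by (auto simp: geodesic_def)
  define n where "n = length p - 1"
  have "p \<noteq> []" using w by (simp add: walk_def)
  then have n: "length p = Suc n" "hd p = p ! 0" "last p = p ! n"
    by (auto simp: n_def hd_conv_nth last_conv_nth)
  have le: "gdist V Adj (p ! i) (p ! j) \<le> j - i" if "i \<le> j" "j < length p" for i j
    using gdist_le_length[OF walk_betw_subwalk[OF w that]] that by simp
  have inV: "p ! i \<in> V" if "i < length p" for i using w that by (auto simp: walk_def)
  have "n \<le> gdist V Adj (p ! 0) (p ! a) + gdist V Adj (p ! a) (p ! b) + gdist V Adj (p ! b) (p ! n)"
    using gdist_triangle[OF assms(1) inV inV inV, of 0 a n] gdist_triangle[OF assms(1) inV inV inV, of a b n]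
      l n assms(3,4) by simp
  then show ?thesis using le[of 0 a] le[of a b] le[of b n] assms(3,4) n by linarith
qed

lemma edge_subset_card_two:
  assumes "simple_graph V Adj" "e \<in> edges V Adj"
  shows "e \<subseteq> V" "card e = 2"
proof -
  obtain u v where e: "e = {u, v}" "Adj u v" using assms(2) unfolding edges_def by blast
  then have "u \<noteq> v" "u \<in> V" "v \<in> V" using assms(1) unfolding simple_graph_def by metis+
  then show "e \<subseteq> V" "card e = 2" using e by auto
qed

lemma edge_dist_le_gdist:
  assumes "finite e" "finite f" "x \<in> e" "y \<in> f"
  shows "edge_dist V Adj e f \<le> gdist V Adj x y"
proof -
  have "{gdist V Adj x y | x y. x \<in> e \<and> y \<in> f} = (\<lambda>(x, y). gdist V Adj x y) ` (e \<times> f)" by auto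
  then show ?thesis unfolding edge_dist_def using assms by (intro Min_le) auto
qed

lemma three_in_set_nth_ordered:
  assumes "{x, y, z} \<subseteq> set p"
  obtains a b c where "a \<le> b" "b \<le> c" "c < length p" "{p ! a, p ! b, p ! c} = {x, y, z}"
proof -
  obtain i j l where "i < length p" "j < length p" "l < length p" "p ! i = x" "p ! j = y" "p ! l = z"
    using assms by (auto simp: in_set_conv_nth)
  moreover consider "i \<le> j" "j \<le> l" | "i \<le> l" "l \<le> j" | "j \<le> i" "i \<le> l"
    | "j \<le> l" "l \<le> i" | "l \<le> i" "i \<le> j" | "l \<le> j" "j \<le> i" by linarith
  ultimately show ?thesis using that by cases (auto simp: insert_commute)
qed

lemma gp_set_Union_far_edges:
  assumes "simple_graph V Adj" "connected_graph V Adj" "F \<subseteq> edges V Adj"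
    and far: "\<forall>e\<in>F. \<forall>f\<in>F. e \<noteq> f \<longrightarrow> diam V Adj \<le> edge_dist V Adj e f"
  shows "gp_set V Adj (\<Union>F)"
proof -
  have eV: "e \<subseteq> V" and card_e: "card e = 2" if "e \<in> F" for e
    using edge_subset_card_two[OF assms(1)] assms(3) that by auto
  have far_gdist: "diam V Adj \<le> gdist V Adj x y"
    if "e \<in> F" "f \<in> F" "e \<noteq> f" "x \<in> e" "y \<in> f" for e f x y
  proof -
    have "finite e" "finite f" using card_e that by (simp_all add: card_ge_0_finite)
    then show ?thesis using far that edge_dist_le_gdist[of e f x y V Adj] by fastforce
  qed
  have not_on_geodesic: False
    if geo: "geodesic V Adj p" and ord: "a \<le> b" "b \<le> c" "c < length p"
      and inS: "{p ! a, p ! b, p ! c} \<subseteq> \<Union>F" and three: "card {p ! a, p ! b, p ! c} = 3"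
    for p a b c
  proof -
    have "p ! a \<noteq> p ! b" "p ! b \<noteq> p ! c" using three by (auto simp: card_insert_if split: if_splits)
    then have abc: "a < b" "b < c" using ord(1,2) le_neq_implies_less by blast+
    have gd: "gdist V Adj (p ! i) (p ! j) = j - i" if "i \<le> j" "j \<le> c" for i j
      using gdist_geodesic_nth[OF assms(2) geo] that ord(3) by simp
    obtain ea eb ec where e: "ea \<in> F" "eb \<in> F" "ec \<in> F" "p ! a \<in> ea" "p ! b \<in> eb" "p ! c \<in> ec"
      using inS by auto
    have "ea \<noteq> eb \<or> eb \<noteq> ec"
    proof (rule ccontr)
      assume "\<not> (ea \<noteq> eb \<or> eb \<noteq> ec)"
      then have "card {p ! a, p ! b, p ! c} \<le> card ea"
        using e card_e by (intro card_mono) (auto intro: card_ge_0_finite)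
      then show False using three card_e e(1) by simp
    qed
    then have "diam V Adj \<le> b - a \<or> diam V Adj \<le> c - b"
      using far_gdist[OF e(1,2) _ e(4,5)] far_gdist[OF e(2,3) _ e(5,6)] gd[of a b] gd[of b c] abc
      by auto
    moreover have "p ! a \<in> V" "p ! c \<in> V"
      using geo ord abc unfolding geodesic_def walk_def by auto
    then have "c - a \<le> diam V Adj"
      using gdist_le_diam[OF assms(1)] gd[of a c] abc by fastforce
    ultimately show False using abc by linarith
  qed
  show ?thesis
    unfolding gp_set_def
  proof (intro conjI ballI impI notI)
    show "\<Union>F \<subseteq> V" using eV by blast
    fix x y z assume "x \<in> \<Union>F" "y \<in> \<Union>F" "z \<in> \<Union>F" "x \<noteq> y \<and> y \<noteq> z \<and> x \<noteq> z"
      and "\<exists>p. geodesic V Adj p \<and> {x, y, z} \<subseteq> set p"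
    then obtain p where p: "geodesic V Adj p" "{x, y, z} \<subseteq> set p"
      and S: "{x, y, z} \<subseteq> \<Union>F" "card {x, y, z} = 3" by auto
    obtain a b c where abc: "a \<le> b" "b \<le> c" "c < length p" "{p ! a, p ! b, p ! c} = {x, y, z}"
      using three_in_set_nth_ordered[OF p(2)] .
    show False using not_on_geodesic[OF p(1) abc(1-3)] S unfolding abc(4) by blast
  qed
qed

lemma card_Union_disjoint_edges:
  assumes "simple_graph V Adj" "F \<subseteq> edges V Adj" "pairwise disjnt F"
  shows "card (\<Union>F) = 2 * card F"
proof -
  have eV: "e \<subseteq> V" and card_e: "card e = 2" if "e \<in> F" for e
    using edge_subset_card_two[OF assms(1)] assms(2) that by auto
  have "finite V" using assms(1) by (simp add: simple_graph_def)
  moreover have "F \<subseteq> Pow V" using eV by blast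
  ultimately have fin: "finite F" "\<forall>e\<in>F. finite e" using eV by (auto intro: finite_subset)
  have "card (\<Union>F) = sum card F" using card_Union_disjoint[OF assms(3)] fin by simp
  also have "\<dots> = 2 * card F" using card_e by simp
  finally show ?thesis .
qed

lemma card_le_gp:
  assumes "simple_graph V Adj" "gp_set V Adj S"
  shows "card S \<le> gp V Adj"
proof -
  have "{card S | S. gp_set V Adj S} \<subseteq> card ` Pow V" unfolding gp_set_def by auto
  moreover have "finite V" using assms(1) by (simp add: simple_graph_def)
  ultimately have "finite {card S | S. gp_set V Adj S}" by (meson finite_Pow_iff finite_imageI finite_subset)
  then show ?thesis unfolding gp_def using assms(2) by (intro Max_ge) auto
qed

theorem proposition4p4:
  fixes V :: "'a set" and Adj :: "'a \<Rightarrow> 'a \<Rightarrow> bool" and F :: "'a set set" and k :: nat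
  assumes "simple_graph V Adj" and "connected_graph V Adj"
    and "diam V Adj = k" and "k \<ge> 2"
    and "F \<subseteq> edges V Adj"
    and "\<forall>e\<in>F. \<forall>f\<in>F. e \<noteq> f \<longrightarrow> edge_dist V Adj e f = k"
  shows "gp V Adj \<ge> 2 * card F"
proof -
  have "gp_set V Adj (\<Union>F)"
    using gp_set_Union_far_edges[OF assms(1,2,5)] assms(3,6) by simp
  moreover have "pairwise disjnt F"
  proof (intro pairwiseI)
    fix e f assume ef: "e \<in> F" "f \<in> F" "e \<noteq> f"
    have "e \<subseteq> V" "card e = 2" "card f = 2"
      using edge_subset_card_two[OF assms(1)] assms(5) ef by auto
    then have "edge_dist V Adj e f \<le> 0" if "x \<in> e" "x \<in> f" for x
      using edge_dist_le_gdist[of e f x x V Adj] gdist_self[of x V Adj] that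
      by (simp add: card_ge_0_finite subsetD)
    then show "disjnt e f" using assms(4,6) ef by (fastforce simp: disjnt_def)
  qed
  ultimately show ?thesis
    using card_le_gp[OF assms(1)] card_Union_disjoint_edges[OF assms(1,5)] by fastforce
qed

end
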